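(* Let $n=2t$ be even, $V=V_n(q)$, and let $X$ be the set of all unordered pairs $\{U,W\}$ of $t$-dimensional subspaces of $V$ with $V=U\oplus W$. Fix a basis $e_1,\dots,e_n$ of $V$, put $U_0=\langle e_1,\dots,e_t\rangle$, $W_0=\langle e_{t+1},\dots,e_n\rangle$, and let $p$ be the linear map swapping $e_t$ and $e_{t+1}$ and fixing the other basis vectors. Let $\mathcal{O}_1$ be the graph on $X$ whose edge set is the orbit under $\mathrm{P\Gamma L}_n(q)$ of the edge $\{\{U_0,W_0\},\{U_0p,W_0p\}\}$, and let $d$ denote distance in $\mathcal{O}_1$. For $A=\{U_1,W_1\}$ and $B=\{U_2,W_2\}$ in $X$ define $\dim(A,B)=\max\{\dim(U_1\cap W_2),\dim(U_1\cap U_2),\dim(U_2\cap W_1),\dim(W_1\cap W_2)\}$. Then $d(A,B)\ge t-\dim(A,B)$ for all $A,B\in X$. *)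

theory Defs
  imports "HOL-Analysis.Analysis" "HOL-Library.Extended_Nat"
begin

text \<open>V = V_n(q) is modelled as 'a^'n for a finite field 'a (q = CARD('a)) and a
finite index type 'n with n = CARD('n). Subspaces are vec.subspace, dimension vec.dim.\<close>

definition field_aut :: "('a::field \<Rightarrow> 'a) \<Rightarrow> bool" where
  "field_aut \<sigma> \<longleftrightarrow> bij \<sigma> \<and> (\<forall>x y. \<sigma> (x + y) = \<sigma> x + \<sigma> y) \<and> (\<forall>x y. \<sigma> (x * y) = \<sigma> x * \<sigma> y)"

text \<open>Semilinear bijections of V, i.e. elements of \<Gamma>L_n(q); P\<Gamma>L_n(q) acts on
subspaces through them.\<close>
definition semilinear_bij :: "('a::field^'n \<Rightarrow> 'a^'n) \<Rightarrow> bool" where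
  "semilinear_bij g \<longleftrightarrow> bij g \<and> (\<forall>v w. g (v + w) = g v + g w) \<and>
     (\<exists>\<sigma>. field_aut \<sigma> \<and> (\<forall>c v. g (c *s v) = \<sigma> c *s g v))"

definition act_pair :: "('a^'n \<Rightarrow> 'a^'n) \<Rightarrow> ('a^'n) set set \<Rightarrow> ('a^'n) set set" where
  "act_pair g A = (\<lambda>U. g ` U) ` A"

definition decomp_pairs :: "nat \<Rightarrow> ('a::field^'n) set set set" where
  "decomp_pairs t = {{U, W} | U W. vec.subspace U \<and> vec.subspace W \<and>
      vec.dim U = t \<and> vec.dim W = t \<and> U \<inter> W = {0} \<and> {u + w | u w. u \<in> U \<and> w \<in> W} = UNIV}"

text \<open>Basis e_1..e_n: the standard basis enumerated by a bijection e :: {1..n} \<rightarrow> 'n.\<close>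
definition bvec :: "(nat \<Rightarrow> 'n) \<Rightarrow> nat \<Rightarrow> 'a::field^'n::finite" where
  "bvec e i = axis (e i) 1"

definition U0 :: "(nat \<Rightarrow> 'n) \<Rightarrow> nat \<Rightarrow> ('a::field^'n::finite) set" where
  "U0 e t = vec.span (bvec e ` {1..t})"

definition W0 :: "(nat \<Rightarrow> 'n) \<Rightarrow> nat \<Rightarrow> ('a::field^'n::finite) set" where
  "W0 e t = vec.span (bvec e ` {t+1..2*t})"

definition swap_map :: "(nat \<Rightarrow> 'n) \<Rightarrow> nat \<Rightarrow> 'a::field^'n::finite \<Rightarrow> 'a^'n" where
  "swap_map e t v = (\<chi> j. v $ (Transposition.transpose (e t) (e (t+1)) j))"

definition O1_edge :: "(nat \<Rightarrow> 'n) \<Rightarrow> nat \<Rightarrow> ('a::field^'n::finite) set set \<Rightarrow> ('a^'n) set set \<Rightarrow> bool" where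
  "O1_edge e t A B \<longleftrightarrow> A \<in> decomp_pairs t \<and> B \<in> decomp_pairs t \<and>
     (\<exists>g. semilinear_bij g \<and>
        {act_pair g {U0 e t, W0 e t}, act_pair g {swap_map e t ` U0 e t, swap_map e t ` W0 e t}} = {A, B})"

definition graph_dist :: "('v \<Rightarrow> 'v \<Rightarrow> bool) \<Rightarrow> 'v \<Rightarrow> 'v \<Rightarrow> enat" where
  "graph_dist E x y = (INF k \<in> {k. \<exists>f. f 0 = x \<and> f k = y \<and> (\<forall>i<k. E (f i) (f (Suc i)))}. enat k)"

definition dim_pair :: "('a::field^'n::finite) set set \<Rightarrow> ('a^'n) set set \<Rightarrow> nat" where
  "dim_pair A B = Max {vec.dim (U \<inter> W) | U W. U \<in> A \<and> W \<in> B}"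

end

theory Submission imports Defs begin

text \<open>Every edge of O_1 is the image of the base edge under a semilinear bijection, and p fixes
  e_1, ..., e_(t-1) and e_(t+2), ..., e_n. Hence along an edge each member X of one pair meets some
  member X' of the other pair in dimension at least t - 1, and the dimension formula then gives
  dim (X \<inter> Y) \<le> dim (X' \<inter> Y) + 1 for every subspace Y. So dim (-, B) drops by at most one per
  edge, and since dim (B, B) = t, every path from A to B has length at least t - dim (A, B).\<close>

lemma graph_dist_ge_potential_diff:
  fixes \<phi> :: "'v \<Rightarrow> nat"
  assumes step: "\<And>x y. E x y \<Longrightarrow> \<phi> y \<le> \<phi> x + 1"
  shows "enat (\<phi> y - \<phi> x) \<le> graph_dist E x y"
  unfolding graph_dist_def
proof (rule INF_greatest)
  fix k assume "k \<in> {k. \<exists>f. f 0 = x \<and> f k = y \<and> (\<forall>i<k. E (f i) (f (Suc i)))}"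
  then obtain f where f: "f 0 = x" "f k = y" "\<forall>i<k. E (f i) (f (Suc i))" by blast
  have "\<phi> (f i) \<le> \<phi> x + i" if "i \<le> k" for i
    using that
  proof (induction i)
    case 0 then show ?case using f(1) by simp
  next
    case (Suc i)
    then have "\<phi> (f (Suc i)) \<le> \<phi> (f i) + 1" using f(3) step by simp
    with Suc show ?case by simp
  qed
  from this[of k] f(2) show "enat (\<phi> y - \<phi> x) \<le> enat k" by simp
qed

lemma dim_Int_exchange:
  assumes "vec.subspace U" "vec.subspace U'" "vec.subspace (Y :: ('a::field^'n) set)"
  shows "vec.dim (U' \<inter> Y) + vec.dim (U \<inter> U') \<le> vec.dim (U \<inter> Y) + vec.dim U'"
proof -
  let ?S = "U \<inter> U'" and ?T = "U' \<inter> Y"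
  have "vec.dim {x + y |x y. x \<in> ?S \<and> y \<in> ?T} + vec.dim (?S \<inter> ?T) = vec.dim ?S + vec.dim ?T"
    using assms by (intro vec.dim_sums_Int vec.subspace_inter)
  moreover have "vec.dim {x + y |x y. x \<in> ?S \<and> y \<in> ?T} \<le> vec.dim U'"
    using vec.subspace_add[OF assms(2)] by (intro vec.dim_subset) auto
  moreover have "vec.dim (?S \<inter> ?T) \<le> vec.dim (U \<inter> Y)"
    by (intro vec.dim_subset) auto
  ultimately show ?thesis by linarith
qed

lemma semilinear_bij_zero: "semilinear_bij g \<Longrightarrow> g 0 = 0"
  unfolding semilinear_bij_def by (metis add_cancel_right_right add.right_neutral)

lemma semilinear_bij_sum: "semilinear_bij g \<Longrightarrow> g (sum f S) = (\<Sum>x\<in>S. g (f x))"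
  by (induction S rule: infinite_finite_induct)
     (simp_all add: semilinear_bij_zero, simp add: semilinear_bij_def)

lemma field_aut_zero: "field_aut \<sigma> \<Longrightarrow> \<sigma> 0 = 0"
  unfolding field_aut_def by (metis add_cancel_right_right add.right_neutral)

lemma semilinear_bij_independent_image:
  assumes g: "semilinear_bij g" and E: "vec.independent E"
  shows "vec.independent (g ` E)"
  unfolding vec.independent_explicit_finite_subsets
proof (intro allI impI ballI)
  obtain \<sigma> where \<sigma>: "field_aut \<sigma>" and g_scale: "\<And>c v. g (c *s v) = \<sigma> c *s g v"
    using g unfolding semilinear_bij_def by blast
  have inj_g: "inj g" using g unfolding semilinear_bij_def bij_def by blast
  have surj_\<sigma>: "surj \<sigma>" using \<sigma> unfolding field_aut_def bij_def by blast
  fix S u v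
  assume S: "S \<subseteq> g ` E" "finite S" and u: "(\<Sum>v\<in>S. u v *s v) = 0" and v: "v \<in> S"
  define S' where "S' = {x\<in>E. g x \<in> S}"
  have S_eq: "S = g ` S'" using S(1) unfolding S'_def by auto
  have S': "finite S'" "S' \<subseteq> E"
    using S(2) inj_g unfolding S_eq by (auto simp: S'_def dest: finite_imageD[OF _ inj_on_subset])
  define d where "d x = inv \<sigma> (u (g x))" for x
  have \<sigma>_d: "\<sigma> (d x) = u (g x)" for x unfolding d_def using surj_\<sigma> by (simp add: surj_f_inv_f)
  have "g (\<Sum>x\<in>S'. d x *s x) = (\<Sum>x\<in>S'. u (g x) *s g x)"
    by (simp add: semilinear_bij_sum[OF g] g_scale \<sigma>_d)
  also have "\<dots> = (\<Sum>v\<in>S. u v *s v)"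
    unfolding S_eq by (simp add: sum.reindex[OF inj_on_subset[OF inj_g subset_UNIV]])
  finally have "(\<Sum>x\<in>S'. d x *s x) = 0"
    using u semilinear_bij_zero[OF g] inj_g by (metis injD)
  then have "\<forall>x\<in>S'. d x = 0" using E S' unfolding vec.independent_explicit_finite_subsets by blast
  moreover obtain x where "x \<in> S'" "v = g x" using v S_eq by auto
  ultimately show "u v = 0" using \<sigma>_d field_aut_zero[OF \<sigma>] by metis
qed

lemma semilinear_bij_dim_image_ge:
  assumes g: "semilinear_bij g" shows "vec.dim S \<le> vec.dim (g ` S)"
proof -
  obtain E where E: "E \<subseteq> S" "vec.independent E" "card E = vec.dim S"
    by (rule vec.basis_exists)
  have "inj_on g E" using g unfolding semilinear_bij_def bij_def by (blast intro: inj_on_subset)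
  then have "card (g ` E) = vec.dim S" using E(3) by (simp add: card_image)
  moreover have "card (g ` E) \<le> vec.dim (g ` S)"
    using E by (intro vec.independent_card_le_dim semilinear_bij_independent_image[OF g]) auto
  ultimately show ?thesis by simp
qed

lemma swap_map_bvec:
  "e i \<noteq> e t \<Longrightarrow> e i \<noteq> e (t+1) \<Longrightarrow> swap_map e t (bvec e i) = bvec e i"
  by (auto simp: swap_map_def bvec_def vec_eq_iff axis_def transpose_eq_iff)

lemma card_bvec_image: "inj_on e I \<Longrightarrow> card (bvec e ` I :: ('a::field^'n::finite) set) = card I"
  by (rule card_image) (auto simp: inj_on_def bvec_def axis_eq_axis)

lemma independent_bvec_image: "vec.independent (bvec e ` I :: ('a::field^'n::finite) set)"
  by (rule vec.independent_mono[OF independent_cart_basis]) (auto simp: bvec_def cart_basis_def)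

lemma card_le_dim_span_Int_swap_map_image:
  assumes inj: "inj_on e I" and I: "I \<subseteq> J" and fixed: "\<forall>i\<in>I. e i \<noteq> e t \<and> e i \<noteq> e (t+1)"
  shows "card I \<le> vec.dim (vec.span (bvec e ` J) \<inter>
                            swap_map e t ` vec.span (bvec e ` J :: ('a::field^'n::finite) set))"
    (is "_ \<le> vec.dim (?S \<inter> swap_map e t ` ?S)")
proof -
  have in_span: "bvec e i \<in> ?S" if "i \<in> I" for i
    using that I by (intro vec.span_base) auto
  have "bvec e i \<in> swap_map e t ` ?S" if "i \<in> I" for i
  proof (rule image_eqI)
    show "bvec e i = swap_map e t (bvec e i)" using fixed that by (simp add: swap_map_bvec)
  qed (rule in_span[OF that])
  with in_span have "card (bvec e ` I :: ('a^'n) set) \<le> vec.dim (?S \<inter> swap_map e t ` ?S)"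
    by (intro vec.independent_card_le_dim independent_bvec_image) auto
  then show ?thesis by (simp add: card_bvec_image[OF inj])
qed

lemma dim_U0_Int_swap_map_image:
  assumes inj: "inj_on e {1..2*t}"
  shows "t - 1 \<le> vec.dim (U0 e t \<inter> swap_map e t ` (U0 e t :: ('a::field^'n::finite) set))"
proof -
  have "\<forall>i\<in>{1..t-1}. e i \<noteq> e t \<and> e i \<noteq> e (t+1)"
    using inj_on_eq_iff[OF inj] by fastforce
  moreover have "inj_on e {1..t-1}" by (rule inj_on_subset[OF inj]) auto
  ultimately have "card {1..t-1} \<le> vec.dim (U0 e t \<inter> swap_map e t ` (U0 e t :: ('a^'n) set))"
    unfolding U0_def by (intro card_le_dim_span_Int_swap_map_image) auto
  then show ?thesis by simp
qed

lemma dim_W0_Int_swap_map_image: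
  assumes inj: "inj_on e {1..2*t}"
  shows "t - 1 \<le> vec.dim (W0 e t \<inter> swap_map e t ` (W0 e t :: ('a::field^'n::finite) set))"
proof -
  have "\<forall>i\<in>{t+2..2*t}. e i \<noteq> e t \<and> e i \<noteq> e (t+1)"
    using inj_on_eq_iff[OF inj] by fastforce
  moreover have "inj_on e {t+2..2*t}" by (rule inj_on_subset[OF inj]) auto
  ultimately have "card {t+2..2*t} \<le> vec.dim (W0 e t \<inter> swap_map e t ` (W0 e t :: ('a^'n) set))"
    unfolding W0_def by (intro card_le_dim_span_Int_swap_map_image) auto
  then show ?thesis by simp
qed

lemma O1_edge_members_meet:
  assumes inj: "inj_on e {1..2*t}" and edge: "O1_edge e t A C"
  shows "\<forall>X\<in>C. \<exists>X'\<in>A. t - 1 \<le> vec.dim (X' \<inter> (X :: ('a::field^'n::finite) set))"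
proof -
  obtain g where g: "semilinear_bij g" and AC:
    "{act_pair g {U0 e t, W0 e t}, act_pair g {swap_map e t ` U0 e t, swap_map e t ` W0 e t}} = {A, C}"
    using edge unfolding O1_edge_def by blast
  have "t - 1 \<le> vec.dim (g ` S \<inter> g ` (swap_map e t ` S))" if "S \<in> {U0 e t, W0 e t}" for S
  proof -
    have "t - 1 \<le> vec.dim (S \<inter> swap_map e t ` S)"
      using that by (elim insertE emptyE)
        (simp_all only: dim_U0_Int_swap_map_image[OF inj] dim_W0_Int_swap_map_image[OF inj])
    also have "\<dots> \<le> vec.dim (g ` (S \<inter> swap_map e t ` S))"
      by (rule semilinear_bij_dim_image_ge[OF g])
    also have "g ` (S \<inter> swap_map e t ` S) = g ` S \<inter> g ` (swap_map e t ` S)"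
      using g unfolding semilinear_bij_def bij_def by (simp add: image_Int)
    finally show ?thesis .
  qed
  then show ?thesis using AC unfolding act_pair_def by (auto simp: doubleton_eq_iff Int_commute)
qed

lemma decomp_pairs_memberD:
  "A \<in> decomp_pairs t \<Longrightarrow> X \<in> A \<Longrightarrow> vec.subspace X \<and> vec.dim X = t"
  unfolding decomp_pairs_def by auto

lemma decomp_pairs_finite_nonempty: "A \<in> decomp_pairs t \<Longrightarrow> finite A \<and> A \<noteq> {}"
  unfolding decomp_pairs_def by auto

lemma dim_pair_eq_Max: "dim_pair A B = Max ((\<lambda>(U, W). vec.dim (U \<inter> W)) ` (A \<times> B))"
  unfolding dim_pair_def by (rule arg_cong[where f=Max]) auto

lemma dim_pair_ge:
  "finite A \<Longrightarrow> finite B \<Longrightarrow> U \<in> A \<Longrightarrow> W \<in> B \<Longrightarrow> vec.dim (U \<inter> W) \<le> dim_pair A B"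
  unfolding dim_pair_eq_Max by (rule Max_ge) force+

lemma dim_pair_attained:
  assumes "finite A" "finite B" "A \<noteq> {}" "B \<noteq> {}"
  obtains U W where "U \<in> A" "W \<in> B" "dim_pair A B = vec.dim (U \<inter> W)"
proof -
  have "dim_pair A B \<in> (\<lambda>(U, W). vec.dim (U \<inter> W)) ` (A \<times> B)"
    unfolding dim_pair_eq_Max using assms by (intro Max_in) auto
  then show ?thesis using that by auto
qed

lemma dim_pair_O1_edge_le:
  assumes inj: "inj_on e {1..2*t}" and edge: "O1_edge e t A C" and B: "B \<in> decomp_pairs t"
  shows "dim_pair C B \<le> dim_pair A (B :: ('a::field^'n::finite) set set) + 1"
proof -
  have A: "A \<in> decomp_pairs t" and C: "C \<in> decomp_pairs t"
    using edge unfolding O1_edge_def by auto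
  obtain X Y where XY: "X \<in> C" "Y \<in> B" "dim_pair C B = vec.dim (X \<inter> Y)"
    using decomp_pairs_finite_nonempty[OF C] decomp_pairs_finite_nonempty[OF B]
    by (blast elim: dim_pair_attained)
  obtain X' where X': "X' \<in> A" "t - 1 \<le> vec.dim (X' \<inter> X)"
    using O1_edge_members_meet[OF inj edge] XY(1) by blast
  have "vec.dim (X \<inter> Y) + vec.dim (X' \<inter> X) \<le> vec.dim (X' \<inter> Y) + vec.dim X"
    using decomp_pairs_memberD A C B X'(1) XY(1,2) by (blast intro: dim_Int_exchange)
  moreover have "vec.dim X = t" using decomp_pairs_memberD[OF C XY(1)] by simp
  moreover have "vec.dim (X' \<inter> Y) \<le> dim_pair A B"
    using decomp_pairs_finite_nonempty[OF A] decomp_pairs_finite_nonempty[OF B] X'(1) XY(2)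
    by (blast intro: dim_pair_ge)
  ultimately show ?thesis using XY(3) X'(2) by linarith
qed

lemma dim_pair_self_ge: "B \<in> decomp_pairs t \<Longrightarrow> t \<le> dim_pair B B"
  using decomp_pairs_finite_nonempty[of B t] decomp_pairs_memberD[of B t]
  by (metis Int_absorb dim_pair_ge ex_in_conv)

theorem lemma3p5:
  fixes t :: nat and e :: "nat \<Rightarrow> 'n::finite"
  assumes n_even: "CARD('n) = 2 * t"
    and basis: "bij_betw e {1..2*t} (UNIV :: 'n set)"
    and A: "A \<in> (decomp_pairs t :: ('a::{field,finite}^'n) set set set)"
    and B: "B \<in> decomp_pairs t"
  shows "graph_dist (O1_edge e t) A B \<ge> enat (t - dim_pair A B)"
proof -
  have inj: "inj_on e {1..2*t}" using basis by (rule bij_betw_imp_inj_on)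
  have "enat (dim_pair B B - dim_pair A B) \<le> graph_dist (O1_edge e t) A B"
    by (rule graph_dist_ge_potential_diff) (rule dim_pair_O1_edge_le[OF inj _ B])
  moreover have "t - dim_pair A B \<le> dim_pair B B - dim_pair A B"
    using dim_pair_self_ge[OF B] by simp
  ultimately show ?thesis by (meson enat_ord_simps(1) order_trans)
qed

end
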